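(* Suppose that $\mathcal X$ is a wide family of subsets of $\mathbb N$ and $\mathfrak A=(\alpha_X:X\in\mathcal X)$ with $\alpha_X\in(71/72,1]$ for all $X\in\mathcal X$. Then any two elements $S,T\in\mathcal M_{\mathcal X,\mathfrak A}$ almost commute, i.e., $ST-TS\in\mathcal K(\ell_2)$.
   Context: Fix an orthonormal basis $(e_k)$ of $\ell_2$. For $A\subseteq\mathbb N$, $P_A$ is the projection onto $\overline{\mathrm{span}}\{e_{2k},e_{2k+1}:k\in A\}$; $H_n=\mathrm{span}\{e_{2n},e_{2n+1}\}$. $\mathcal A_0$ is the set of $T\in\mathcal B(\ell_2)$ with $\langle Te_k,e_m\rangle\ne0\Rightarrow\{k,m\}\subseteq\{2n,2n+1\}$ for some $n$, written $T=(T_n)$, $T_n\in\mathcal B(H_n)$; $\mathcal A_0(X)=\{T\in\mathcal A_0:T_n=0\ \forall n\notin X\}$. For $\alpha\in(71/72,1]$, $f_{\alpha,2n}=\alpha e_{2n}+\sqrt{1-\alpha^2}e_{2n+1}$, $f_{\alpha,2n+1}=\sqrt{1-\alpha^2}e_{2n}-\alpha e_{2n+1}$; $\mathcal D(X,\alpha)$: $T\in\mathcal A_0(X)$ with $T_n$ diagonal in $\{f_{\alpha,2n},f_{\alpha,2n+1}\}$ for $n\in X$; $\mathcal D_{\mathcal K}(X,\alpha)=\{S+R:S\in\mathcal D(X,\alpha),R\in\mathcal K(\ell_2)\cap\mathcal A_0(X)\}$. $\mathcal M_{\mathcal X,\mathfrak A}=\{T\in\mathcal A_0:P_XTP_X\in\mathcal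 D_{\mathcal K}(X,\alpha_X)\ \forall X\in\mathcal X\}$. $\mathcal X$ is wide if every infinite subset of $\mathbb N$ has infinite intersection with some member of $\mathcal X$. *)

theory Defs
  imports "HOL-Analysis.Analysis"
begin

text \<open>Complex l2(N) is modelled concretely: vectors are functions nat => complex,
  l2 is the set of square-summable ones; operators are functions on vectors whose
  values are only relevant on l2.\<close>

definition l2 :: "(nat \<Rightarrow> complex) set" where
  "l2 = {x. summable (\<lambda>n. (cmod (x n))\<^sup>2)}"

definition l2norm :: "(nat \<Rightarrow> complex) \<Rightarrow> real" where
  "l2norm x = sqrt (\<Sum>n. (cmod (x n))\<^sup>2)"

definition ebasis :: "nat \<Rightarrow> nat \<Rightarrow> complex" where
  "ebasis k = (\<lambda>n. if n = k then 1 else 0)"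

definition bounded_op :: "((nat \<Rightarrow> complex) \<Rightarrow> (nat \<Rightarrow> complex)) \<Rightarrow> bool" where
  "bounded_op T \<longleftrightarrow>
     (\<forall>x\<in>l2. T x \<in> l2) \<and>
     (\<forall>x\<in>l2. \<forall>y\<in>l2. T (\<lambda>n. x n + y n) = (\<lambda>n. T x n + T y n)) \<and>
     (\<forall>x\<in>l2. \<forall>c::complex. T (\<lambda>n. c * x n) = (\<lambda>n. c * T x n)) \<and>
     (\<exists>C. \<forall>x\<in>l2. l2norm (T x) \<le> C * l2norm x)"

definition compact_op :: "((nat \<Rightarrow> complex) \<Rightarrow> (nat \<Rightarrow> complex)) \<Rightarrow> bool" where
  "compact_op T \<longleftrightarrow> bounded_op T \<and>
     (\<forall>x :: nat \<Rightarrow> nat \<Rightarrow> complex. (\<forall>k. x k \<in> l2 \<and> l2norm (x k) \<le> 1) \<longrightarrow>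
        (\<exists>r y. strict_mono r \<and> y \<in> l2 \<and> (\<lambda>k. l2norm (\<lambda>n. T (x (r k)) n - y n)) \<longlonglongrightarrow> 0))"

definition Pproj :: "nat set \<Rightarrow> (nat \<Rightarrow> complex) \<Rightarrow> (nat \<Rightarrow> complex)" where
  "Pproj A x = (\<lambda>m. if m div 2 \<in> A then x m else 0)"

text \<open>A_0: bounded operators with \<langle>T e_k, e_m\<rangle> \<noteq> 0 only if {k,m} \<subseteq> {2n,2n+1};
  note \<langle>T e_k, e_m\<rangle> = (T e_k) m\<close>
definition A0 :: "((nat \<Rightarrow> complex) \<Rightarrow> (nat \<Rightarrow> complex)) set" where
  "A0 = {T. bounded_op T \<and>
          (\<forall>k m. T (ebasis k) m \<noteq> 0 \<longrightarrow> (\<exists>n. {k, m} \<subseteq> {2*n, 2*n+1}))}"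

definition A0X :: "nat set \<Rightarrow> ((nat \<Rightarrow> complex) \<Rightarrow> (nat \<Rightarrow> complex)) set" where
  "A0X X = {T. T \<in> A0 \<and> (\<forall>n. n \<notin> X \<longrightarrow> T (ebasis (2*n)) = (\<lambda>_. 0) \<and> T (ebasis (2*n+1)) = (\<lambda>_. 0))}"

definition fvec :: "real \<Rightarrow> nat \<Rightarrow> nat \<Rightarrow> complex" where
  "fvec \<alpha> k = (if even k
      then (\<lambda>m. complex_of_real \<alpha> * ebasis k m + complex_of_real (sqrt (1 - \<alpha>\<^sup>2)) * ebasis (k+1) m)
      else (\<lambda>m. complex_of_real (sqrt (1 - \<alpha>\<^sup>2)) * ebasis (k-1) m - complex_of_real \<alpha> * ebasis k m))"

definition Dset :: "nat set \<Rightarrow> real \<Rightarrow> ((nat \<Rightarrow> complex) \<Rightarrow> (nat \<Rightarrow> complex)) set" where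
  "Dset X \<alpha> = {T. T \<in> A0X X \<and>
     (\<forall>n\<in>X. (\<exists>c::complex. T (fvec \<alpha> (2*n)) = (\<lambda>m. c * fvec \<alpha> (2*n) m)) \<and>
             (\<exists>\<mu>::complex. T (fvec \<alpha> (2*n+1)) = (\<lambda>m. \<mu> * fvec \<alpha> (2*n+1) m)))}"

definition DKset :: "nat set \<Rightarrow> real \<Rightarrow> ((nat \<Rightarrow> complex) \<Rightarrow> (nat \<Rightarrow> complex)) set" where
  "DKset X \<alpha> = {T. \<exists>S R. S \<in> Dset X \<alpha> \<and> compact_op R \<and> R \<in> A0X X \<and>
                        (\<forall>x\<in>l2. T x = (\<lambda>n. S x n + R x n))}"

definition Mset :: "nat set set \<Rightarrow> (nat set \<Rightarrow> real) \<Rightarrow> ((nat \<Rightarrow> complex) \<Rightarrow> (nat \<Rightarrow> complex)) set" where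
  "Mset \<X> \<alpha> = {T. T \<in> A0 \<and> (\<forall>X\<in>\<X>. (\<lambda>x. Pproj X (T (Pproj X x))) \<in> DKset X (\<alpha> X))}"

definition wide :: "nat set set \<Rightarrow> bool" where
  "wide \<X> \<longleftrightarrow> (\<forall>A. infinite A \<longrightarrow> (\<exists>X\<in>\<X>. infinite (A \<inter> X)))"

end

(*
  Every operator in A_0 is block diagonal with 2 x 2 blocks T_n acting on H_n, and so is the
  commutator C = ST - TS, whose blocks are the commutators of the blocks of S and T. A bounded
  block-diagonal operator is compact as soon as its blocks tend to 0, because then its tails
  are uniformly small. Fix X in the family. On the blocks H_n with n in X, S = D + R and
  T = D' + R' with D, D' diagonal in the common orthonormal basis f_{alpha,2n}, f_{alpha,2n+1},
  so that D_n D'_n = D'_n D_n, and with R, R' compact, so that their blocks tend to 0. As all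
  blocks are uniformly bounded, C_n tends to 0 along X. Finally, wideness turns convergence
  along every member of the family into convergence: the set of n with |C_n| >= eps, if
  infinite, would meet some member of the family in an infinite set.
*)

theory Submission
  imports Defs
begin

type_synonym operator = "(nat \<Rightarrow> complex) \<Rightarrow> (nat \<Rightarrow> complex)"

section \<open>The sequence space l2\<close>

lemma l2D: "x \<in> l2 \<Longrightarrow> summable (\<lambda>n. (cmod (x n))\<^sup>2)"
  by (simp add: l2_def)

lemma l2norm_nonneg: "x \<in> l2 \<Longrightarrow> 0 \<le> l2norm x"
  unfolding l2norm_def by (simp add: l2_def suminf_nonneg)

lemma l2norm_sq: "x \<in> l2 \<Longrightarrow> (l2norm x)\<^sup>2 = (\<Sum>n. (cmod (x n))\<^sup>2)"
  unfolding l2norm_def by (simp add: l2_def suminf_nonneg)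

lemma sum_cmod_sq_le_l2norm_sq:
  assumes "x \<in> l2" "finite F"
  shows "(\<Sum>m\<in>F. (cmod (x m))\<^sup>2) \<le> (l2norm x)\<^sup>2"
  unfolding l2norm_sq[OF assms(1)] using assms l2D by (intro sum_le_suminf) auto

lemma cmod_le_l2norm:
  assumes "x \<in> l2"
  shows "cmod (x m) \<le> l2norm x"
proof (rule power2_le_imp_le)
  show "(cmod (x m))\<^sup>2 \<le> (l2norm x)\<^sup>2"
    using sum_cmod_sq_le_l2norm_sq[OF assms, of "{m}"] by simp
qed (rule l2norm_nonneg[OF assms])

lemma l2I_partial_sums_bounded:
  assumes "\<And>M. (\<Sum>m<M. (cmod (x m))\<^sup>2) \<le> K"
  shows "x \<in> l2"
  unfolding l2_def mem_Collect_eq by (auto intro!: summableI_nonneg_bounded[where x = K] assms)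

lemma l2norm_sq_le_of_partial_sums:
  assumes "\<And>M. (\<Sum>m<M. (cmod (x m))\<^sup>2) \<le> K"
  shows "(l2norm x)\<^sup>2 \<le> K"
  using l2I_partial_sums_bounded[OF assms] unfolding l2norm_sq[OF l2I_partial_sums_bounded[OF assms]]
  by (intro suminf_le_const) (auto intro: assms l2D)

lemma cmod_add_sq_le: "(cmod (a + b))\<^sup>2 \<le> 2 * (cmod a)\<^sup>2 + 2 * (cmod b)\<^sup>2"
proof -
  have "(cmod (a + b))\<^sup>2 \<le> (cmod a + cmod b)\<^sup>2"
    by (simp add: power_mono norm_triangle_ineq)
  also have "\<dots> \<le> 2 * (cmod a)\<^sup>2 + 2 * (cmod b)\<^sup>2"
    using zero_le_power2[of "cmod a - cmod b"] by (simp add: power2_eq_square algebra_simps)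
  finally show ?thesis .
qed

lemma cmod_diff_sq_le: "(cmod (a - b))\<^sup>2 \<le> 2 * (cmod a)\<^sup>2 + 2 * (cmod b)\<^sup>2"
  using cmod_add_sq_le[of a "- b"] by simp

lemma l2_diff:
  assumes "x \<in> l2" "y \<in> l2"
  shows "(\<lambda>n. x n - y n) \<in> l2"
  unfolding l2_def mem_Collect_eq
proof (rule summable_comparison_test)
  show "summable (\<lambda>n. 2 * (cmod (x n))\<^sup>2 + 2 * (cmod (y n))\<^sup>2)"
    using assms by (intro summable_add summable_mult l2D)
qed (use cmod_diff_sq_le in auto)

lemma l2_scale: "x \<in> l2 \<Longrightarrow> (\<lambda>n. c * x n) \<in> l2"
  using summable_mult[OF l2D, of x "(cmod c)\<^sup>2"]
  by (simp add: l2_def norm_mult power_mult_distrib)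

lemma l2_restrict:
  assumes "x \<in> l2"
  shows "(\<lambda>k. if P k then x k else 0) \<in> l2"
  unfolding l2_def mem_Collect_eq by (rule summable_comparison_test[OF _ l2D[OF assms]]) auto

lemma l2norm_diff_sq_le:
  assumes "x \<in> l2" "y \<in> l2"
  shows "(l2norm (\<lambda>n. x n - y n))\<^sup>2 \<le> 2 * (l2norm x)\<^sup>2 + 2 * (l2norm y)\<^sup>2"
proof (rule l2norm_sq_le_of_partial_sums)
  fix M
  have "(\<Sum>m<M. (cmod (x m - y m))\<^sup>2) \<le> (\<Sum>m<M. 2 * (cmod (x m))\<^sup>2 + 2 * (cmod (y m))\<^sup>2)"
    by (intro sum_mono cmod_diff_sq_le)
  also have "\<dots> \<le> 2 * (l2norm x)\<^sup>2 + 2 * (l2norm y)\<^sup>2"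
    using sum_cmod_sq_le_l2norm_sq[OF assms(1), of "{..<M}"] sum_cmod_sq_le_l2norm_sq[OF assms(2), of "{..<M}"]
    by (simp add: sum.distrib flip: sum_distrib_left)
  finally show "(\<Sum>m<M. (cmod (x m - y m))\<^sup>2) \<le> 2 * (l2norm x)\<^sup>2 + 2 * (l2norm y)\<^sup>2" .
qed

lemma ebasis_cmod_sq: "(\<lambda>n. (cmod (ebasis k n))\<^sup>2) = (\<lambda>n. if n = k then 1 else 0)"
  by (auto simp: ebasis_def)

lemma ebasis_l2: "ebasis k \<in> l2"
  unfolding l2_def mem_Collect_eq ebasis_cmod_sq using sums_single[of k "\<lambda>_. 1::real"] sums_summable by auto

lemma l2norm_ebasis: "l2norm (ebasis k) = 1"
  unfolding l2norm_def ebasis_cmod_sq using sums_single[of k "\<lambda>_. 1::real"] sums_unique by fastforce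

lemma l2norm_tail_tendsto_zero:
  assumes "x \<in> l2"
  shows "(\<lambda>N. l2norm (\<lambda>k. if k < N then 0 else x k)) \<longlonglongrightarrow> 0"
proof -
  define f where "f = (\<lambda>n. (cmod (x n))\<^sup>2)"
  have f: "summable f" using l2D[OF assms] by (simp add: f_def)
  have "l2norm (\<lambda>k. if k < N then 0 else x k) = sqrt (suminf f - (\<Sum>k<N. f k))" for N
  proof -
    have fin: "(\<lambda>k. if k \<in> {..<N} then f k else 0) sums (\<Sum>k<N. f k)"
      by (rule sums_If_finite_set) simp
    have "(\<lambda>k. (cmod (if k < N then 0 else x k))\<^sup>2) = (\<lambda>k. f k - (if k \<in> {..<N} then f k else 0))"
      by (auto simp: f_def)
    then show ?thesis
      unfolding l2norm_def using suminf_diff[OF f sums_summable[OF fin]] sums_unique[OF fin] by simp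
  qed
  moreover have "(\<lambda>N. sqrt (suminf f - (\<Sum>k<N. f k))) \<longlonglongrightarrow> sqrt (suminf f - suminf f)"
    by (intro tendsto_intros summable_LIMSEQ f)
  ultimately show ?thesis by simp
qed

section \<open>Bounded operators\<close>

lemma bounded_op_l2: "bounded_op T \<Longrightarrow> x \<in> l2 \<Longrightarrow> T x \<in> l2"
  unfolding bounded_op_def by blast

lemma bounded_op_add:
  "bounded_op T \<Longrightarrow> x \<in> l2 \<Longrightarrow> y \<in> l2 \<Longrightarrow> T (\<lambda>n. x n + y n) = (\<lambda>n. T x n + T y n)"
  unfolding bounded_op_def by blast

lemma bounded_op_scale: "bounded_op T \<Longrightarrow> x \<in> l2 \<Longrightarrow> T (\<lambda>n. c * x n) = (\<lambda>n. c * T x n)"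
  unfolding bounded_op_def by blast

lemma bounded_op_bound:
  assumes "bounded_op T"
  obtains C where "C \<ge> 0" "\<And>x. x \<in> l2 \<Longrightarrow> l2norm (T x) \<le> C * l2norm x"
proof -
  obtain C where C: "\<forall>x\<in>l2. l2norm (T x) \<le> C * l2norm x"
    using assms unfolding bounded_op_def by blast
  have "l2norm (T x) \<le> max C 0 * l2norm x" if "x \<in> l2" for x
    using C that mult_right_mono[OF max.cobounded1 l2norm_nonneg[OF that], of C 0] by force
  then show thesis using that[of "max C 0"] by simp
qed

lemma bounded_op_comp:
  assumes S: "bounded_op S" and T: "bounded_op T"
  shows "bounded_op (\<lambda>x. S (T x))"
proof -
  obtain CS where CS: "CS \<ge> 0" "\<And>x. x \<in> l2 \<Longrightarrow> l2norm (S x) \<le> CS * l2norm x"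
    using bounded_op_bound[OF S] by blast
  obtain CT where CT: "\<And>x. x \<in> l2 \<Longrightarrow> l2norm (T x) \<le> CT * l2norm x"
    using bounded_op_bound[OF T] by blast
  have "l2norm (S (T x)) \<le> (CS * CT) * l2norm x" if "x \<in> l2" for x
  proof -
    have "l2norm (S (T x)) \<le> CS * l2norm (T x)" using CS(2) bounded_op_l2[OF T that] .
    also have "\<dots> \<le> CS * (CT * l2norm x)" by (rule mult_left_mono[OF CT[OF that] CS(1)])
    finally show ?thesis by simp
  qed
  then show ?thesis
    using S T unfolding bounded_op_def by (auto simp: bounded_op_l2 bounded_op_add bounded_op_scale)
qed

lemma bounded_op_diff:
  assumes S: "bounded_op S" and T: "bounded_op T"
  shows "bounded_op (\<lambda>x n. S x n - T x n)"
proof -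
  obtain CS where CS: "CS \<ge> 0" "\<And>x. x \<in> l2 \<Longrightarrow> l2norm (S x) \<le> CS * l2norm x"
    using bounded_op_bound[OF S] by blast
  obtain CT where CT: "CT \<ge> 0" "\<And>x. x \<in> l2 \<Longrightarrow> l2norm (T x) \<le> CT * l2norm x"
    using bounded_op_bound[OF T] by blast
  have bound: "l2norm (\<lambda>n. S x n - T x n) \<le> (2 * (CS + CT)) * l2norm x" if x: "x \<in> l2" for x
  proof (rule power2_le_imp_le)
    have Sx: "S x \<in> l2" and Tx: "T x \<in> l2" using S T x by (simp_all add: bounded_op_l2)
    have "(l2norm (\<lambda>n. S x n - T x n))\<^sup>2 \<le> 2 * (l2norm (S x))\<^sup>2 + 2 * (l2norm (T x))\<^sup>2"
      using l2norm_diff_sq_le[OF Sx Tx] .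
    also have "\<dots> \<le> 2 * (CS * l2norm x)\<^sup>2 + 2 * (CT * l2norm x)\<^sup>2"
      using CS CT x Sx Tx by (intro add_mono mult_left_mono power_mono) (auto simp: l2norm_nonneg)
    also have "\<dots> \<le> ((2 * (CS + CT)) * l2norm x)\<^sup>2"
      using CS(1) CT(1) l2norm_nonneg[OF x] by (simp add: power2_eq_square algebra_simps)
    finally show "(l2norm (\<lambda>n. S x n - T x n))\<^sup>2 \<le> ((2 * (CS + CT)) * l2norm x)\<^sup>2" .
  qed (use CS(1) CT(1) l2norm_nonneg[OF x] in simp)
  have "\<forall>x\<in>l2. l2norm (\<lambda>n. S x n - T x n) \<le> (2 * (CS + CT)) * l2norm x"
    using bound by blast
  then show ?thesis
    using S T unfolding bounded_op_def
    by (auto simp: bounded_op_l2 bounded_op_add bounded_op_scale l2_diff right_diff_distrib)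
qed

lemma bounded_op_entry_bound:
  assumes "bounded_op T"
  obtains B where "\<And>k m. cmod (T (ebasis k) m) \<le> B"
proof -
  obtain C where C: "\<And>x. x \<in> l2 \<Longrightarrow> l2norm (T x) \<le> C * l2norm x"
    using bounded_op_bound[OF assms] by blast
  have "cmod (T (ebasis k) m) \<le> C" for k m
    by (rule order_trans[OF cmod_le_l2norm[OF bounded_op_l2[OF assms ebasis_l2]]])
      (use C[OF ebasis_l2] in \<open>simp add: l2norm_ebasis\<close>)
  then show thesis by (rule that)
qed

section \<open>Block-diagonal operators\<close>

definition block_diagonal :: "operator \<Rightarrow> bool" where
  "block_diagonal T \<longleftrightarrow> (\<forall>k m. T (ebasis k) m \<noteq> 0 \<longrightarrow> k div 2 = m div 2)"

text \<open>The matrix of the paper's \<open>T\<^sub>n\<close> in the basis \<open>e\<^sub>2\<^sub>n, e\<^sub>2\<^sub>n\<^sub>+\<^sub>1\<close> of \<open>H\<^sub>n\<close>.\<close>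

definition block :: "operator \<Rightarrow> nat \<Rightarrow> nat \<Rightarrow> nat \<Rightarrow> complex" where
  "block T n i j = T (ebasis (2 * n + j)) (2 * n + i)"

lemma sum_lessThan_2: "(\<Sum>j<2. f j) = f 0 + f (1::nat)"
  by (simp add: numeral_2_eq_2)

lemma A0_bounded_op: "T \<in> A0 \<Longrightarrow> bounded_op T"
  unfolding A0_def by blast

lemma A0_block_diagonal: "T \<in> A0 \<Longrightarrow> block_diagonal T"
  unfolding A0_def block_diagonal_def by force

lemma bounded_op_apply_truncation:
  assumes T: "bounded_op T" and x: "x \<in> l2"
  shows "T (\<lambda>k. if k < N then x k else 0) = (\<lambda>m. \<Sum>k<N. x k * T (ebasis k) m)"
proof (induction N)
  case 0
  have "(\<lambda>k. if k < (0::nat) then x k else 0) = (\<lambda>n. 0 * ebasis 0 n)" by simp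
  then show ?case using bounded_op_scale[OF T ebasis_l2, of 0 0] by simp
next
  case (Suc N)
  have "(\<lambda>k. if k < Suc N then x k else 0)
      = (\<lambda>n. (\<lambda>k. if k < N then x k else 0) n + (\<lambda>n. x N * ebasis N n) n)"
    by (auto simp: ebasis_def less_Suc_eq)
  then show ?case
    using Suc.IH by (simp add: bounded_op_add[OF T l2_restrict[OF x] l2_scale[OF ebasis_l2]]
        bounded_op_scale[OF T ebasis_l2])
qed

lemma bounded_op_apply_sums:
  assumes T: "bounded_op T" and x: "x \<in> l2"
  shows "(\<lambda>k. x k * T (ebasis k) m) sums T x m"
proof -
  obtain C where C: "\<And>x. x \<in> l2 \<Longrightarrow> l2norm (T x) \<le> C * l2norm x"
    using bounded_op_bound[OF T] by blast
  define tail where "tail N = (\<lambda>k. if k < N then 0 else x k)" for N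
  have tail_l2: "tail N \<in> l2" for N
  proof -
    have "tail N = (\<lambda>k. if \<not> k < N then x k else 0)" by (auto simp: tail_def)
    then show ?thesis using l2_restrict[OF x] by simp
  qed
  have "T x m - (\<Sum>k<N. x k * T (ebasis k) m) = T (tail N) m" for N
  proof -
    have "x = (\<lambda>n. (\<lambda>k. if k < N then x k else 0) n + tail N n)" by (auto simp: tail_def)
    then have "T x = (\<lambda>n. T (\<lambda>k. if k < N then x k else 0) n + T (tail N) n)"
      by (metis bounded_op_add[OF T l2_restrict[OF x] tail_l2])
    then show ?thesis by (simp add: bounded_op_apply_truncation[OF T x])
  qed
  then have bound: "norm (T x m - (\<Sum>k<N. x k * T (ebasis k) m)) \<le> C * l2norm (tail N)" for N
    using order_trans[OF cmod_le_l2norm[OF bounded_op_l2[OF T tail_l2]] C[OF tail_l2]] by simp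
  have "(\<lambda>N. C * l2norm (tail N)) \<longlonglongrightarrow> 0"
    unfolding tail_def by (rule tendsto_mult_right_zero[OF l2norm_tail_tendsto_zero[OF x]])
  then have "(\<lambda>N. T x m - (\<Sum>k<N. x k * T (ebasis k) m)) \<longlonglongrightarrow> 0"
    by (rule Lim_null_comparison[OF always_eventually[OF allI[OF bound]]])
  then have "(\<lambda>N. T x m - (T x m - (\<Sum>k<N. x k * T (ebasis k) m))) \<longlonglongrightarrow> T x m - 0"
    by (intro tendsto_diff tendsto_const)
  then show ?thesis unfolding sums_def by simp
qed

lemma block_diagonal_apply:
  assumes T: "bounded_op T" "block_diagonal T" and x: "x \<in> l2"
  shows "T x m = (\<Sum>j<2. T (ebasis (2 * (m div 2) + j)) m * x (2 * (m div 2) + j))"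
proof -
  define p where "p = m div 2"
  have "k \<in> {2 * p, 2 * p + 1}" if "T (ebasis k) m \<noteq> 0" for k
  proof -
    have "k div 2 = p" using T(2) that unfolding block_diagonal_def p_def by blast
    then show ?thesis by auto
  qed
  then have "(\<lambda>k. x k * T (ebasis k) m) sums (\<Sum>k\<in>{2 * p, 2 * p + 1}. x k * T (ebasis k) m)"
    by (intro sums_finite) auto
  then show ?thesis
    using sums_unique2[OF bounded_op_apply_sums[OF T(1) x]]
    by (simp add: sum_lessThan_2 p_def mult.commute)
qed

lemma block_diagonal_comp:
  assumes S: "bounded_op S" "block_diagonal S" and T: "bounded_op T" "block_diagonal T"
  shows "block_diagonal (\<lambda>x. S (T x))"
  unfolding block_diagonal_def
proof (intro allI impI)
  fix k m
  assume "S (T (ebasis k)) m \<noteq> 0"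
  then have "T (ebasis k) (2 * (m div 2)) \<noteq> 0 \<or> T (ebasis k) (2 * (m div 2) + 1) \<noteq> 0"
    unfolding block_diagonal_apply[OF S bounded_op_l2[OF T(1) ebasis_l2]] sum_lessThan_2
    by auto
  then show "k div 2 = m div 2"
    using T(2) unfolding block_diagonal_def by force
qed

lemma block_diagonal_diff:
  "block_diagonal S \<Longrightarrow> block_diagonal T \<Longrightarrow> block_diagonal (\<lambda>x n. S x n - T x n)"
  unfolding block_diagonal_def by (metis diff_zero)

lemma block_comp:
  assumes S: "bounded_op S" "block_diagonal S" and T: "bounded_op T" and i: "i < 2"
  shows "block (\<lambda>x. S (T x)) n i j = (\<Sum>l<2. block S n i l * block T n l j)"
  unfolding block_def block_diagonal_apply[OF S bounded_op_l2[OF T ebasis_l2]] using i by simp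

section \<open>Compactness of block-diagonal operators\<close>

lemma bounded_pointwise_convergent_subseq:
  fixes z :: "nat \<Rightarrow> nat \<Rightarrow> complex"
  assumes "\<And>k m. cmod (z k m) \<le> B"
  obtains r y where "strict_mono r" "\<And>m. (\<lambda>k. z (r k) m) \<longlonglongrightarrow> y m"
proof -
  have "compact (PiE UNIV (\<lambda>_::nat. cball (0::complex) B))"
    using compactin_PiE[of "\<lambda>_. euclidean" UNIV "\<lambda>_. cball (0::complex) B"]
    by (simp add: euclidean_product_topology)
  moreover have "\<forall>k. z k \<in> PiE UNIV (\<lambda>_. cball 0 B)" using assms by auto
  ultimately obtain y r where r: "strict_mono r" and lim: "(z \<circ> r) \<longlonglongrightarrow> y"
    using compact_imp_seq_compact seq_compactE by metis
  have "(\<lambda>k. z (r k) m) \<longlonglongrightarrow> y m" for m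
    using continuous_on_tendsto_compose[OF continuous_on_product_coordinates[of m] lim]
    by (simp add: comp_def)
  with r show thesis by (rule that)
qed

lemma l2_pointwise_limit:
  assumes z: "\<And>k. z k \<in> l2" "\<And>k. l2norm (z k) \<le> B" and lim: "\<And>m. (\<lambda>k. z k m) \<longlonglongrightarrow> y m"
  shows "y \<in> l2"
proof (rule l2I_partial_sums_bounded)
  fix M
  have "(\<lambda>k. \<Sum>m<M. (cmod (z k m))\<^sup>2) \<longlonglongrightarrow> (\<Sum>m<M. (cmod (y m))\<^sup>2)"
    by (intro tendsto_intros lim)
  moreover have "(\<Sum>m<M. (cmod (z k m))\<^sup>2) \<le> B\<^sup>2" for k
    using sum_cmod_sq_le_l2norm_sq[OF z(1)[of k], of "{..<M}"] power_mono[OF z(2)[of k] l2norm_nonneg[OF z(1)], of 2]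
    by simp
  ultimately show "(\<Sum>m<M. (cmod (y m))\<^sup>2) \<le> B\<^sup>2"
    by (intro LIMSEQ_le_const2) auto
qed

lemma l2norm_diff_sq_le_head_tails:
  assumes "\<And>M. (\<Sum>m\<in>{N..<M}. (cmod (z m))\<^sup>2) \<le> \<epsilon>" "\<And>M. (\<Sum>m\<in>{N..<M}. (cmod (y m))\<^sup>2) \<le> \<epsilon>"
  shows "(l2norm (\<lambda>n. z n - y n))\<^sup>2 \<le> (\<Sum>m<N. (cmod (z m - y m))\<^sup>2) + 4 * \<epsilon>"
proof (rule l2norm_sq_le_of_partial_sums)
  fix M
  let ?f = "\<lambda>m. (cmod (z m - y m))\<^sup>2"
  have "(\<Sum>m<M. ?f m) \<le> (\<Sum>m<max M N. ?f m)"
    by (intro sum_mono2) auto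
  also have "\<dots> = (\<Sum>m<N. ?f m) + (\<Sum>m\<in>{N..<max M N}. ?f m)"
    using sum.atLeastLessThan_concat[of 0 N "max M N" ?f] by (simp add: atLeast0LessThan)
  also have "(\<Sum>m\<in>{N..<max M N}. ?f m)
      \<le> 2 * (\<Sum>m\<in>{N..<max M N}. (cmod (z m))\<^sup>2) + 2 * (\<Sum>m\<in>{N..<max M N}. (cmod (y m))\<^sup>2)"
    by (simp add: sum_distrib_left flip: sum.distrib) (intro sum_mono cmod_diff_sq_le)
  finally show "(\<Sum>m<M. ?f m) \<le> (\<Sum>m<N. ?f m) + 4 * \<epsilon>"
    using assms[of "max M N"] by linarith
qed

lemma l2_tendsto_of_uniform_tails:
  assumes z: "\<And>k. z k \<in> l2" and y: "y \<in> l2" and lim: "\<And>m. (\<lambda>k. z k m) \<longlonglongrightarrow> y m"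
    and tails: "\<And>\<epsilon>. \<epsilon> > 0 \<Longrightarrow> \<exists>N. \<forall>k M. (\<Sum>m\<in>{N..<M}. (cmod (z k m))\<^sup>2) \<le> \<epsilon>"
  shows "(\<lambda>k. l2norm (\<lambda>n. z k n - y n)) \<longlonglongrightarrow> 0"
proof (rule order_tendstoI)
  fix a :: real
  assume "a < 0"
  then show "\<forall>\<^sub>F k in sequentially. a < l2norm (\<lambda>n. z k n - y n)"
    using l2norm_nonneg[OF l2_diff[OF z y]] by (simp add: less_le_trans)
next
  fix e :: real
  assume e: "0 < e"
  define \<epsilon> where "\<epsilon> = e\<^sup>2 / 8"
  have \<epsilon>: "\<epsilon> > 0" "5 * \<epsilon> < e\<^sup>2" using e by (simp_all add: \<epsilon>_def)
  obtain N where ztail: "\<And>k M. (\<Sum>m\<in>{N..<M}. (cmod (z k m))\<^sup>2) \<le> \<epsilon>"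
    using tails[OF \<epsilon>(1)] by blast
  have ytail: "(\<Sum>m\<in>{N..<M}. (cmod (y m))\<^sup>2) \<le> \<epsilon>" for M
    by (rule LIMSEQ_le_const2[where X = "\<lambda>k. \<Sum>m\<in>{N..<M}. (cmod (z k m))\<^sup>2"])
      (use ztail in \<open>auto intro!: tendsto_intros lim\<close>)
  have "(\<lambda>k. \<Sum>m<N. (cmod (z k m - y m))\<^sup>2) \<longlonglongrightarrow> (\<Sum>m<N. (cmod (y m - y m))\<^sup>2)"
    by (intro tendsto_intros lim)
  then have "\<forall>\<^sub>F k in sequentially. (\<Sum>m<N. (cmod (z k m - y m))\<^sup>2) < \<epsilon>"
    using \<epsilon> by (auto dest: order_tendstoD(2))
  then show "\<forall>\<^sub>F k in sequentially. l2norm (\<lambda>n. z k n - y n) < e"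
  proof eventually_elim
    case (elim k)
    then have "(l2norm (\<lambda>n. z k n - y n))\<^sup>2 < e\<^sup>2"
      using l2norm_diff_sq_le_head_tails[where z = "z k" and y = y, OF ztail ytail] \<epsilon>(2)
      by linarith
    then show ?case
      using e by (simp add: power_less_imp_less_base)
  qed
qed

lemma compact_op_of_uniform_tails:
  assumes C: "bounded_op C"
    and tails: "\<And>\<epsilon>. \<epsilon> > 0 \<Longrightarrow> \<exists>N. \<forall>x\<in>l2. \<forall>M. (\<Sum>m\<in>{N..<M}. (cmod (C x m))\<^sup>2) \<le> \<epsilon> * (l2norm x)\<^sup>2"
  shows "compact_op C"
  unfolding compact_op_def
proof (intro conjI C allI impI)
  fix x :: "nat \<Rightarrow> nat \<Rightarrow> complex"
  assume x: "\<forall>k. x k \<in> l2 \<and> l2norm (x k) \<le> 1"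
  obtain B where B: "B \<ge> 0" "\<And>x. x \<in> l2 \<Longrightarrow> l2norm (C x) \<le> B * l2norm x"
    using bounded_op_bound[OF C] by blast
  define z where "z k = C (x k)" for k
  have z: "z k \<in> l2" for k
    unfolding z_def using x bounded_op_l2[OF C] by blast
  have z_norm: "l2norm (z k) \<le> B" for k
    unfolding z_def using B(2)[of "x k"] mult_left_mono[of "l2norm (x k)" 1 B] B(1) x by force
  have "cmod (z k m) \<le> B" for k m
    using order_trans[OF cmod_le_l2norm[OF z] z_norm] .
  then obtain r y where r: "strict_mono r" and lim: "\<And>m. (\<lambda>k. z (r k) m) \<longlonglongrightarrow> y m"
    using bounded_pointwise_convergent_subseq[of z B] by blast
  have y: "y \<in> l2"
    using l2_pointwise_limit[of "z \<circ> r" B y] z z_norm lim by simp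
  have "(\<lambda>k. l2norm (\<lambda>n. z (r k) n - y n)) \<longlonglongrightarrow> 0"
  proof (rule l2_tendsto_of_uniform_tails[OF z y lim])
    fix \<epsilon> :: real
    assume "\<epsilon> > 0"
    then obtain N where N: "\<forall>x\<in>l2. \<forall>M. (\<Sum>m\<in>{N..<M}. (cmod (C x m))\<^sup>2) \<le> \<epsilon> * (l2norm x)\<^sup>2"
      using tails by blast
    have "(\<Sum>m\<in>{N..<M}. (cmod (z k m))\<^sup>2) \<le> \<epsilon>" for k M
    proof -
      have "(l2norm (x k))\<^sup>2 \<le> 1" using x l2norm_nonneg by (simp add: power_le_one)
      then have "\<epsilon> * (l2norm (x k))\<^sup>2 \<le> \<epsilon>"
        using \<open>\<epsilon> > 0\<close> by (simp add: mult_left_le)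
      then show ?thesis
        using N x unfolding z_def by (meson order_trans)
    qed
    then show "\<exists>N. \<forall>k M. (\<Sum>m\<in>{N..<M}. (cmod (z (r k) m))\<^sup>2) \<le> \<epsilon>" by blast
  qed
  with r y show "\<exists>r y. strict_mono r \<and> y \<in> l2 \<and> (\<lambda>k. l2norm (\<lambda>n. C (x (r k)) n - y n)) \<longlonglongrightarrow> 0"
    unfolding z_def by blast
qed

lemma sum_block_pairs:
  fixes x :: "nat \<Rightarrow> complex"
  shows "(\<Sum>m<2 * K. (cmod (x (2 * (m div 2))))\<^sup>2 + (cmod (x (2 * (m div 2) + 1)))\<^sup>2)
    = 2 * (\<Sum>m<2 * K. (cmod (x m))\<^sup>2)"
proof (induction K)
  case (Suc K)
  have "2 * Suc K = Suc (Suc (2 * K))" by simp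
  then show ?case using Suc.IH by simp
qed simp

lemma block_diagonal_apply_sq_le:
  assumes C: "bounded_op C" "block_diagonal C" and x: "x \<in> l2"
    and small: "\<And>j. j < 2 \<Longrightarrow> cmod (C (ebasis (2 * (m div 2) + j)) m) \<le> \<delta>"
  shows "(cmod (C x m))\<^sup>2 \<le> 2 * \<delta>\<^sup>2 * ((cmod (x (2 * (m div 2))))\<^sup>2 + (cmod (x (2 * (m div 2) + 1)))\<^sup>2)"
proof -
  define p where "p = m div 2"
  define c where "c j = C (ebasis (2 * p + j)) m" for j
  have "C x m = c 0 * x (2 * p) + c 1 * x (2 * p + 1)"
    using block_diagonal_apply[OF C x, of m] by (simp add: sum_lessThan_2 c_def p_def)
  then have "(cmod (C x m))\<^sup>2 \<le> 2 * (cmod (c 0))\<^sup>2 * (cmod (x (2 * p)))\<^sup>2 + 2 * (cmod (c 1))\<^sup>2 * (cmod (x (2 * p + 1)))\<^sup>2"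
    using cmod_add_sq_le[of "c 0 * x (2 * p)" "c 1 * x (2 * p + 1)"]
    by (simp add: norm_mult power_mult_distrib mult.assoc)
  also have "\<dots> \<le> 2 * \<delta>\<^sup>2 * (cmod (x (2 * p)))\<^sup>2 + 2 * \<delta>\<^sup>2 * (cmod (x (2 * p + 1)))\<^sup>2"
    using small[of 0] small[of 1] unfolding c_def p_def
    by (intro add_mono mult_right_mono mult_left_mono power_mono) auto
  finally show ?thesis by (simp add: p_def algebra_simps)
qed

lemma compact_op_of_blocks_tendsto_zero:
  assumes C: "bounded_op C" "block_diagonal C"
    and blocks: "\<And>i j. i < 2 \<Longrightarrow> j < 2 \<Longrightarrow> (\<lambda>n. block C n i j) \<longlonglongrightarrow> 0"
  shows "compact_op C"
proof (rule compact_op_of_uniform_tails[OF C(1)])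
  fix \<epsilon> :: real
  assume \<epsilon>: "\<epsilon> > 0"
  define \<delta> where "\<delta> = sqrt (\<epsilon> / 4)"
  have \<delta>: "\<delta> > 0" "4 * \<delta>\<^sup>2 = \<epsilon>" using \<epsilon> by (simp_all add: \<delta>_def)
  have "\<forall>\<^sub>F n in sequentially. cmod (block C n i j) < \<delta>" if "i < 2" "j < 2" for i j
    using blocks[OF that] \<delta>(1) by (auto simp: tendsto_iff dist_norm)
  then have "\<forall>\<^sub>F n in sequentially. \<forall>i\<in>{..<2}. \<forall>j\<in>{..<2}. cmod (block C n i j) < \<delta>"
    by (intro eventually_ball_finite ballI) auto
  then obtain N where N: "\<forall>n\<ge>N. \<forall>i\<in>{..<2}. \<forall>j\<in>{..<2}. cmod (block C n i j) < \<delta>"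
    unfolding eventually_sequentially by blast
  show "\<exists>N. \<forall>x\<in>l2. \<forall>M. (\<Sum>m\<in>{N..<M}. (cmod (C x m))\<^sup>2) \<le> \<epsilon> * (l2norm x)\<^sup>2"
  proof (intro exI[of _ "2 * N"] ballI allI)
    fix x M
    assume x: "x \<in> l2"
    define w where "w m = (cmod (x (2 * (m div 2))))\<^sup>2 + (cmod (x (2 * (m div 2) + 1)))\<^sup>2" for m
    have "(cmod (C x m))\<^sup>2 \<le> 2 * \<delta>\<^sup>2 * w m" if m: "m \<ge> 2 * N" for m
    proof (unfold w_def, rule block_diagonal_apply_sq_le[OF C x])
      fix j :: nat
      assume "j < 2"
      moreover have "C (ebasis (2 * (m div 2) + j)) m = block C (m div 2) (m mod 2) j"
        unfolding block_def by simp
      ultimately show "cmod (C (ebasis (2 * (m div 2) + j)) m) \<le> \<delta>"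
        using N m by (auto intro: less_imp_le)
    qed
    then have "(\<Sum>m\<in>{2 * N..<M}. (cmod (C x m))\<^sup>2) \<le> (\<Sum>m\<in>{2 * N..<M}. 2 * \<delta>\<^sup>2 * w m)"
      by (intro sum_mono) auto
    also have "\<dots> \<le> (\<Sum>m<2 * M. 2 * \<delta>\<^sup>2 * w m)"
      by (intro sum_mono2) (auto simp: w_def)
    also have "\<dots> = 2 * \<delta>\<^sup>2 * (\<Sum>m<2 * M. w m)"
      by (simp add: sum_distrib_left)
    also have "\<dots> = 4 * \<delta>\<^sup>2 * (\<Sum>m<2 * M. (cmod (x m))\<^sup>2)"
      unfolding w_def sum_block_pairs by simp
    also have "\<dots> \<le> \<epsilon> * (l2norm x)\<^sup>2"
      using sum_cmod_sq_le_l2norm_sq[OF x, of "{..<2 * M}"] \<delta> \<epsilon> by (simp add: mult_left_mono)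
    finally show "(\<Sum>m\<in>{2 * N..<M}. (cmod (C x m))\<^sup>2) \<le> \<epsilon> * (l2norm x)\<^sup>2" .
  qed
qed

lemma compact_opE:
  fixes x :: "nat \<Rightarrow> nat \<Rightarrow> complex"
  assumes "compact_op T" "\<And>k. x k \<in> l2" "\<And>k. l2norm (x k) \<le> 1"
  obtains r y where "strict_mono r" "y \<in> l2" "(\<lambda>k. l2norm (\<lambda>n. T (x (r k)) n - y n)) \<longlonglongrightarrow> 0"
proof -
  have "\<forall>k. x k \<in> l2 \<and> l2norm (x k) \<le> 1" using assms(2,3) by blast
  from mp[OF spec[OF conjunct2[OF assms(1)[unfolded compact_op_def]], of x] this] that show thesis
    by blast
qed

lemma block_diagonal_ebasis_limit:
  assumes R: "bounded_op R" "block_diagonal R" and u: "strict_mono u" and y: "y \<in> l2"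
    and lim: "(\<lambda>k. l2norm (\<lambda>n. R (ebasis (u k)) n - y n)) \<longlonglongrightarrow> 0"
  shows "y m = 0"
proof -
  have "(\<lambda>k. R (ebasis (u k)) m - y m) \<longlonglongrightarrow> 0"
    using cmod_le_l2norm[OF l2_diff[OF bounded_op_l2[OF R(1) ebasis_l2] y]]
    by (intro Lim_null_comparison[OF _ lim]) auto
  moreover have "\<forall>\<^sub>F k in sequentially. R (ebasis (u k)) m - y m = - y m"
  proof (rule eventually_sequentiallyI[of "m + 2"])
    fix k
    assume "m + 2 \<le> k"
    then have "u k div 2 \<noteq> m div 2" using seq_suble[OF u, of k] by auto
    then show "R (ebasis (u k)) m - y m = - y m" using R(2) unfolding block_diagonal_def by auto
  qed
  ultimately have "(\<lambda>k. - y m) \<longlonglongrightarrow> 0" by (rule Lim_transform_eventually)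
  then show ?thesis by (simp add: LIMSEQ_const_iff)
qed

lemma compact_op_ebasis_tendsto_zero:
  assumes R: "compact_op R" "block_diagonal R"
  shows "(\<lambda>k. l2norm (R (ebasis k))) \<longlonglongrightarrow> 0"
proof (rule ccontr)
  have R_bounded: "bounded_op R" using R(1) unfolding compact_op_def by blast
  assume "\<not> (\<lambda>k. l2norm (R (ebasis k))) \<longlonglongrightarrow> 0"
  then obtain \<epsilon> where "\<epsilon> > 0"
    and "\<not> (\<forall>\<^sub>F k in sequentially. dist (l2norm (R (ebasis k))) 0 < \<epsilon>)"
    unfolding tendsto_iff by blast
  moreover have "dist (l2norm (R (ebasis k))) 0 = l2norm (R (ebasis k))" for k
    using l2norm_nonneg[OF bounded_op_l2[OF R_bounded ebasis_l2]] by simp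
  ultimately have "infinite {k. \<epsilon> \<le> l2norm (R (ebasis k))}"
    unfolding infinite_nat_iff_unbounded_le eventually_sequentially by (auto simp: not_less)
  then obtain q :: "nat \<Rightarrow> nat" where q: "strict_mono q" "\<forall>k. q k \<in> {k. \<epsilon> \<le> l2norm (R (ebasis k))}"
    using infinite_enumerate by blast
  obtain r y where r: "strict_mono r" and y: "y \<in> l2"
    and lim: "(\<lambda>k. l2norm (\<lambda>n. R (ebasis (q (r k))) n - y n)) \<longlonglongrightarrow> 0"
    by (rule compact_opE[OF R(1), of "\<lambda>k. ebasis (q k)"]) (simp_all add: ebasis_l2 l2norm_ebasis)
  have "strict_mono (q \<circ> r)" using q(1) r by (rule strict_mono_o)
  then have "y m = 0" for m
    using block_diagonal_ebasis_limit[OF R_bounded R(2) _ y] lim by (simp add: comp_def)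
  then have "(\<lambda>k. l2norm (R (ebasis (q (r k))))) \<longlonglongrightarrow> 0" using lim by simp
  moreover have "\<forall>k. \<epsilon> \<le> l2norm (R (ebasis (q (r k))))" using q(2) by simp
  ultimately have "\<epsilon> \<le> 0" by (intro LIMSEQ_le_const) auto
  with \<open>\<epsilon> > 0\<close> show False by simp
qed

lemma compact_op_block_tendsto_zero:
  assumes "compact_op R" "block_diagonal R"
  shows "(\<lambda>n. block R n i j) \<longlonglongrightarrow> 0"
proof (rule Lim_null_comparison)
  have "strict_mono (\<lambda>n. 2 * n + j)" by (rule strict_monoI) simp
  then show "(\<lambda>n. l2norm (R (ebasis (2 * n + j)))) \<longlonglongrightarrow> 0"
    using LIMSEQ_subseq_LIMSEQ[OF compact_op_ebasis_tendsto_zero[OF assms]] by (simp add: comp_def)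
  have "bounded_op R" using assms(1) unfolding compact_op_def by blast
  then show "\<forall>\<^sub>F n in sequentially. norm (block R n i j) \<le> l2norm (R (ebasis (2 * n + j)))"
    unfolding block_def by (simp add: cmod_le_l2norm bounded_op_l2 ebasis_l2)
qed

section \<open>Wide families\<close>

lemma tendsto_of_wide:
  fixes f :: "nat \<Rightarrow> 'a::topological_space"
  assumes wide: "wide \<X>" and along: "\<And>X. X \<in> \<X> \<Longrightarrow> (f \<longlongrightarrow> l) (inf sequentially (principal X))"
  shows "f \<longlonglongrightarrow> l"
proof (rule topological_tendstoI)
  fix S
  assume S: "open S" "l \<in> S"
  show "\<forall>\<^sub>F n in sequentially. f n \<in> S"
  proof (rule ccontr)
    assume "\<not> (\<forall>\<^sub>F n in sequentially. f n \<in> S)"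
    then have "infinite {n. f n \<notin> S}"
      unfolding infinite_nat_iff_unbounded_le eventually_sequentially by auto
    then obtain X where X: "X \<in> \<X>" and "infinite ({n. f n \<notin> S} \<inter> X)"
      using wide unfolding wide_def by blast
    moreover have "\<forall>\<^sub>F n in sequentially. n \<in> X \<longrightarrow> f n \<in> S"
      using topological_tendstoD[OF along[OF X] S] by (simp add: eventually_inf_principal)
    then obtain N where "\<forall>n\<ge>N. n \<in> X \<longrightarrow> f n \<in> S"
      unfolding eventually_sequentially by blast
    then have "{n. f n \<notin> S} \<inter> X \<subseteq> {..<N}"
      using not_le by blast
    then have "finite ({n. f n \<notin> S} \<inter> X)"
      by (rule finite_subset) simp
    ultimately show False by blast
  qed
qed

section \<open>Commutators of 2 \<open>\<times>\<close> 2 blocks\<close>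

definition commutator :: "operator \<Rightarrow> operator \<Rightarrow> operator" where
  "commutator S T = (\<lambda>x n. S (T x) n - T (S x) n)"

definition mat_commutator ::
    "(nat \<Rightarrow> nat \<Rightarrow> complex) \<Rightarrow> (nat \<Rightarrow> nat \<Rightarrow> complex) \<Rightarrow> nat \<Rightarrow> nat \<Rightarrow> complex" where
  "mat_commutator A B i j = (\<Sum>l<2. A i l * B l j - B i l * A l j)"

lemma bounded_op_commutator:
  assumes "bounded_op S" "bounded_op T"
  shows "bounded_op (commutator S T)"
  unfolding commutator_def
  by (rule bounded_op_diff[OF bounded_op_comp[OF assms] bounded_op_comp[OF assms(2,1)]])

lemma block_diagonal_commutator:
  assumes "bounded_op S" "block_diagonal S" "bounded_op T" "block_diagonal T"
  shows "block_diagonal (commutator S T)"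
  unfolding commutator_def
  by (rule block_diagonal_diff[OF block_diagonal_comp[OF assms] block_diagonal_comp[OF assms(3,4,1,2)]])

lemma block_commutator:
  assumes "bounded_op S" "block_diagonal S" "bounded_op T" "block_diagonal T" "i < 2"
  shows "block (commutator S T) n i j = mat_commutator (block S n) (block T n) i j"
proof -
  have "block (commutator S T) n i j = block (\<lambda>x. S (T x)) n i j - block (\<lambda>x. T (S x)) n i j"
    by (simp add: block_def commutator_def)
  then show ?thesis
    using assms by (simp add: block_comp mat_commutator_def sum_subtractf)
qed

lemma mat_commutator_swap: "mat_commutator B A i j = - mat_commutator A B i j"
  unfolding mat_commutator_def by (simp add: sum_negf[symmetric])

lemma mat_commutator_split:
  assumes "\<forall>i<2. \<forall>j<2. S i j = D i j + R i j" "\<forall>i<2. \<forall>j<2. T i j = D' i j + R' i j"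
    and "i < 2" "j < 2"
  shows "mat_commutator S T i j
    = mat_commutator D D' i j + mat_commutator D R' i j + mat_commutator R T i j"
  using assms by (simp add: mat_commutator_def sum_lessThan_2 algebra_simps)

text \<open>\<open>c F F\<^sup>T + \<mu> G G\<^sup>T\<close> has eigenvectors \<open>F, G\<close>; orthogonality of \<open>F\<close> and \<open>G\<close> alone makes
  two such matrices commute.\<close>

lemma mat_commutator_spectral:
  assumes A: "\<forall>i<2. \<forall>j<2. A i j = c * F i * F j + \<mu> * G i * G j"
    and B: "\<forall>i<2. \<forall>j<2. B i j = c' * F i * F j + \<mu>' * G i * G j"
    and orth: "F 0 * G 0 + F 1 * G 1 = 0" and ij: "i < 2" "j < 2"
  shows "mat_commutator A B i j = 0"
proof -
  have "mat_commutator A B i j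
      = (c * \<mu>' - c' * \<mu>) * (F i * G j - G i * F j) * (F 0 * G 0 + F 1 * G 1)"
    using A B ij by (simp add: mat_commutator_def sum_lessThan_2 algebra_simps)
  then show ?thesis using orth by simp
qed

lemma Bfun_mult_tendsto_zero:
  fixes f g :: "'a \<Rightarrow> 'b::real_normed_algebra"
  assumes "Bfun f F" "(g \<longlongrightarrow> 0) F"
  shows "((\<lambda>x. f x * g x) \<longlongrightarrow> 0) F"
  using bounded_bilinear.Bfun_prod_Zfun[OF bounded_bilinear_mult assms(1)] assms(2)
  by (simp add: tendsto_Zfun_iff)

lemma mat_commutator_tendsto_zero:
  assumes "\<And>i j. Bfun (\<lambda>n. A n i j) F" "\<And>i j. ((\<lambda>n. E n i j) \<longlongrightarrow> 0) F"
  shows "((\<lambda>n. mat_commutator (A n) (E n) i j) \<longlongrightarrow> 0) F"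
proof -
  have "((\<lambda>n. A n i l * E n l j - E n i l * A n l j) \<longlongrightarrow> 0) F" for l
  proof -
    have "((\<lambda>n. A n i l * E n l j) \<longlongrightarrow> 0) F" "((\<lambda>n. A n l j * E n i l) \<longlongrightarrow> 0) F"
      using assms by (simp_all add: Bfun_mult_tendsto_zero)
    then show ?thesis using tendsto_diff by (fastforce simp: mult.commute)
  qed
  then show ?thesis
    unfolding mat_commutator_def by (intro tendsto_null_sum) auto
qed

section \<open>Operators diagonal in the basis \<open>f\<^sub>\<alpha>\<close>\<close>

definition f_even :: "real \<Rightarrow> nat \<Rightarrow> complex" where
  "f_even a i = (if i = 0 then of_real a else of_real (sqrt (1 - a\<^sup>2)))"

definition f_odd :: "real \<Rightarrow> nat \<Rightarrow> complex" where
  "f_odd a i = (if i = 0 then of_real (sqrt (1 - a\<^sup>2)) else - of_real a)"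

lemma fvec_even: "fvec a (2 * n) = (\<lambda>m. f_even a 0 * ebasis (2 * n) m + f_even a 1 * ebasis (2 * n + 1) m)"
  by (simp add: fvec_def f_even_def)

lemma fvec_odd:
  "fvec a (2 * n + 1) = (\<lambda>m. f_odd a 0 * ebasis (2 * n) m + f_odd a 1 * ebasis (2 * n + 1) m)"
  by (simp add: fvec_def f_odd_def fun_eq_iff)

lemma fvec_even_block: "i < 2 \<Longrightarrow> fvec a (2 * n) (2 * n + i) = f_even a i"
  by (cases "i = 0") (auto simp: fvec_even ebasis_def f_even_def)

lemma fvec_odd_block: "i < 2 \<Longrightarrow> fvec a (2 * n + 1) (2 * n + i) = f_odd a i"
  by (cases "i = 0") (auto simp: fvec_def ebasis_def f_odd_def)

lemma f_even_f_odd_orthogonal: "f_even a 0 * f_odd a 0 + f_even a 1 * f_odd a 1 = 0"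
  by (simp add: f_even_def f_odd_def)

lemma bounded_op_apply_pair:
  assumes "bounded_op T"
  shows "T (\<lambda>m. u * ebasis k m + v * ebasis l m) = (\<lambda>m. u * T (ebasis k) m + v * T (ebasis l) m)"
  using bounded_op_add[OF assms l2_scale[OF ebasis_l2] l2_scale[OF ebasis_l2]]
  by (simp add: bounded_op_scale[OF assms ebasis_l2])

text \<open>The matrix with rows \<open>(a, b)\<close> and \<open>(b, -a)\<close> is its own inverse when \<open>a\<^sup>2 + b\<^sup>2 = 1\<close>.\<close>

lemma reflection_solve:
  fixes a b :: real and u v p q :: complex
  assumes ab: "a\<^sup>2 + b\<^sup>2 = 1"
    and p: "of_real a * u + of_real b * v = p" and q: "of_real b * u - of_real a * v = q"
  shows "u = of_real a * p + of_real b * q" "v = of_real b * p - of_real a * q"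
proof -
  have one: "of_real a * of_real a + of_real b * of_real b = (1::complex)"
    using arg_cong[OF ab, of "of_real :: real \<Rightarrow> complex"] by (simp add: power2_eq_square)
  have "of_real a * p + of_real b * q = (of_real a * of_real a + of_real b * of_real b) * u"
    unfolding p[symmetric] q[symmetric] by (simp add: algebra_simps)
  then show "u = of_real a * p + of_real b * q" by (simp add: one)
  have "of_real b * p - of_real a * q = (of_real a * of_real a + of_real b * of_real b) * v"
    unfolding p[symmetric] q[symmetric] by (simp add: algebra_simps)
  then show "v = of_real b * p - of_real a * q" by (simp add: one)
qed

lemma Dset_block:
  assumes D: "D \<in> Dset X a" and a: "a\<^sup>2 \<le> 1" and n: "n \<in> X"
  obtains c \<mu> where
    "\<And>i j. i < 2 \<Longrightarrow> j < 2 \<Longrightarrow> block D n i j = c * f_even a i * f_even a j + \<mu> * f_odd a i * f_odd a j"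
proof -
  have D_bounded: "bounded_op D" using D unfolding Dset_def A0X_def A0_def by blast
  obtain c where c: "D (fvec a (2 * n)) = (\<lambda>m. c * fvec a (2 * n) m)"
    using D n unfolding Dset_def by blast
  obtain \<mu> where \<mu>: "D (fvec a (2 * n + 1)) = (\<lambda>m. \<mu> * fvec a (2 * n + 1) m)"
    using D n unfolding Dset_def by blast
  have "block D n i j = c * f_even a i * f_even a j + \<mu> * f_odd a i * f_odd a j"
    if i: "i < 2" and j: "j < 2" for i j
  proof -
    have "f_even a 0 * block D n i 0 + f_even a 1 * block D n i 1 = D (fvec a (2 * n)) (2 * n + i)"
      unfolding fvec_even block_def bounded_op_apply_pair[OF D_bounded] by simp
    also have "\<dots> = c * f_even a i" using c i by (simp add: fvec_even_block)
    finally have even: "f_even a 0 * block D n i 0 + f_even a 1 * block D n i 1 = c * f_even a i" .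
    have "f_odd a 0 * block D n i 0 + f_odd a 1 * block D n i 1 = D (fvec a (2 * n + 1)) (2 * n + i)"
      unfolding fvec_odd block_def bounded_op_apply_pair[OF D_bounded] by simp
    also have "\<dots> = \<mu> * f_odd a i" using \<mu> fvec_odd_block[OF i] by simp
    finally have odd: "f_odd a 0 * block D n i 0 + f_odd a 1 * block D n i 1 = \<mu> * f_odd a i" .
    define b where "b = sqrt (1 - a\<^sup>2)"
    have ab: "a\<^sup>2 + b\<^sup>2 = 1" using a by (simp add: b_def)
    have F: "f_even a 0 = of_real a" "f_even a 1 = of_real b"
      and G: "f_odd a 0 = of_real b" "f_odd a 1 = - of_real a"
      by (simp_all add: f_even_def f_odd_def b_def)
    have "of_real a * block D n i 0 + of_real b * block D n i 1 = c * f_even a i"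
      using even by (simp only: F)
    moreover have "of_real b * block D n i 0 - of_real a * block D n i 1 = \<mu> * f_odd a i"
      using odd unfolding G by simp
    ultimately have "block D n i 0 = of_real a * (c * f_even a i) + of_real b * (\<mu> * f_odd a i)"
      and "block D n i 1 = of_real b * (c * f_even a i) - of_real a * (\<mu> * f_odd a i)"
      by (rule reflection_solve[OF ab])+
    moreover have "j = 0 \<or> j = 1" using j by auto
    ultimately show ?thesis
      by (elim disjE) (simp_all only: F G, simp_all add: mult_ac)
  qed
  then show thesis by (rule that)
qed

lemma Dset_blocks_commute:
  assumes "D \<in> Dset X a" "D' \<in> Dset X a" "a\<^sup>2 \<le> 1" "n \<in> X" "i < 2" "j < 2"
  shows "mat_commutator (block D n) (block D' n) i j = 0"
proof -
  obtain c \<mu> where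
    "\<And>i j. i < 2 \<Longrightarrow> j < 2 \<Longrightarrow> block D n i j = c * f_even a i * f_even a j + \<mu> * f_odd a i * f_odd a j"
    using Dset_block[OF assms(1,3,4)] by blast
  moreover obtain c' \<mu>' where
    "\<And>i j. i < 2 \<Longrightarrow> j < 2 \<Longrightarrow> block D' n i j = c' * f_even a i * f_even a j + \<mu>' * f_odd a i * f_odd a j"
    using Dset_block[OF assms(2,3,4)] by blast
  ultimately show ?thesis
    using assms(5,6) f_even_f_odd_orthogonal by (intro mat_commutator_spectral) auto
qed

lemma DKset_compression_blocks:
  assumes "(\<lambda>x. Pproj X (S (Pproj X x))) \<in> DKset X a"
  obtains D R where "D \<in> Dset X a" "compact_op R" "block_diagonal R"
    "\<And>n i j. n \<in> X \<Longrightarrow> i < 2 \<Longrightarrow> j < 2 \<Longrightarrow> block S n i j = block D n i j + block R n i j"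
proof -
  obtain D R where D: "D \<in> Dset X a" and R: "compact_op R" "R \<in> A0X X"
    and SDR: "\<forall>x\<in>l2. Pproj X (S (Pproj X x)) = (\<lambda>n. D x n + R x n)"
    using assms unfolding DKset_def by blast
  have "block S n i j = block D n i j + block R n i j" if "n \<in> X" "i < 2" "j < 2" for n i j
  proof -
    have "Pproj X (ebasis (2 * n + j)) = ebasis (2 * n + j)"
      using that by (auto simp: Pproj_def ebasis_def)
    moreover have "Pproj X (S (Pproj X (ebasis (2 * n + j))))
        = (\<lambda>m. D (ebasis (2 * n + j)) m + R (ebasis (2 * n + j)) m)"
      using SDR ebasis_l2 by blast
    ultimately have "Pproj X (S (ebasis (2 * n + j))) (2 * n + i) = block D n i j + block R n i j"
      unfolding block_def by simp
    then show ?thesis using that by (simp add: Pproj_def block_def)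
  qed
  moreover have "block_diagonal R" using R(2) A0_block_diagonal unfolding A0X_def by blast
  ultimately show thesis using that D R(1) by blast
qed

lemma bounded_op_block_Bfun:
  assumes "bounded_op T"
  shows "Bfun (\<lambda>n. block T n i j) F"
proof -
  obtain B where "\<And>k m. cmod (T (ebasis k) m) \<le> B"
    using bounded_op_entry_bound[OF assms] by blast
  then show ?thesis unfolding block_def by (intro BfunI[where K = B]) simp
qed

lemma commutator_blocks_tendsto_zero_within:
  assumes S: "S \<in> A0" "(\<lambda>x. Pproj X (S (Pproj X x))) \<in> DKset X a"
    and T: "T \<in> A0" "(\<lambda>x. Pproj X (T (Pproj X x))) \<in> DKset X a"
    and a: "a\<^sup>2 \<le> 1" and ij: "i < 2" "j < 2"
  shows "((\<lambda>n. block (commutator S T) n i j) \<longlongrightarrow> 0) (inf sequentially (principal X))"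
proof -
  obtain DS RS where DS: "DS \<in> Dset X a" "compact_op RS" "block_diagonal RS"
    and S_blocks: "\<And>n i j. n \<in> X \<Longrightarrow> i < 2 \<Longrightarrow> j < 2 \<Longrightarrow> block S n i j = block DS n i j + block RS n i j"
    using DKset_compression_blocks[OF S(2)] by blast
  obtain DT RT where DT: "DT \<in> Dset X a" "compact_op RT" "block_diagonal RT"
    and T_blocks: "\<And>n i j. n \<in> X \<Longrightarrow> i < 2 \<Longrightarrow> j < 2 \<Longrightarrow> block T n i j = block DT n i j + block RT n i j"
    using DKset_compression_blocks[OF T(2)] by blast
  let ?F = "inf sequentially (principal X)"
  have "block (commutator S T) n i j
      = mat_commutator (block DS n) (block RT n) i j - mat_commutator (block T n) (block RS n) i j"
    if n: "n \<in> X" for n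
  proof -
    have "block (commutator S T) n i j = mat_commutator (block S n) (block T n) i j"
      using S(1) T(1) ij(1) by (simp add: block_commutator A0_bounded_op A0_block_diagonal)
    also have "\<dots> = mat_commutator (block DS n) (block DT n) i j
        + mat_commutator (block DS n) (block RT n) i j + mat_commutator (block RS n) (block T n) i j"
      using S_blocks T_blocks n ij by (intro mat_commutator_split) auto
    also have "mat_commutator (block DS n) (block DT n) i j = 0"
      by (rule Dset_blocks_commute[OF DS(1) DT(1) a n ij])
    finally show ?thesis by (simp add: mat_commutator_swap[of "block T n"])
  qed
  then have "\<forall>\<^sub>F n in ?F. mat_commutator (block DS n) (block RT n) i j
      - mat_commutator (block T n) (block RS n) i j = block (commutator S T) n i j"
    unfolding eventually_inf_principal by (simp add: always_eventually)
  moreover have RS: "((\<lambda>n. block RS n i j) \<longlongrightarrow> 0) ?F" and RT: "((\<lambda>n. block RT n i j) \<longlongrightarrow> 0) ?F"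
    for i j
    using compact_op_block_tendsto_zero[OF DS(2,3)] compact_op_block_tendsto_zero[OF DT(2,3)]
    by (auto intro: tendsto_mono[OF inf_le1])
  have "((\<lambda>n. mat_commutator (block DS n) (block RT n) i j
      - mat_commutator (block T n) (block RS n) i j) \<longlongrightarrow> 0 - 0) ?F"
    using DS(1) T(1) unfolding Dset_def A0X_def
    by (intro tendsto_diff mat_commutator_tendsto_zero RS RT bounded_op_block_Bfun)
      (auto simp: A0_bounded_op)
  ultimately show ?thesis by (simp add: Lim_transform_eventually)
qed

theorem lemma4p13:
  fixes \<X> :: "nat set set" and \<alpha> :: "nat set \<Rightarrow> real"
    and S T :: "(nat \<Rightarrow> complex) \<Rightarrow> (nat \<Rightarrow> complex)"
  assumes "wide \<X>"
    and "\<forall>X\<in>\<X>. 71/72 < \<alpha> X \<and> \<alpha> X \<le> 1"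
    and "S \<in> Mset \<X> \<alpha>" and "T \<in> Mset \<X> \<alpha>"
  shows "compact_op (\<lambda>x n. S (T x) n - T (S x) n)"
proof -
  have S: "S \<in> A0" and T: "T \<in> A0" using assms(3,4) unfolding Mset_def by auto
  have "(\<lambda>n. block (commutator S T) n i j) \<longlonglongrightarrow> 0" if "i < 2" "j < 2" for i j
  proof (rule tendsto_of_wide[OF assms(1)])
    fix X
    assume X: "X \<in> \<X>"
    \<comment> \<open>only \<open>\<alpha> X\<^sup>2 \<le> 1\<close> is needed here; the bound \<open>71/72\<close> matters elsewhere in the paper\<close>
    then have "(\<alpha> X)\<^sup>2 \<le> 1" using assms(2) by (intro power_le_one) auto
    with X show "((\<lambda>n. block (commutator S T) n i j) \<longlongrightarrow> 0) (inf sequentially (principal X))"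
      using S T assms(3,4) that unfolding Mset_def
      by (intro commutator_blocks_tendsto_zero_within) auto
  qed
  then have "compact_op (commutator S T)"
    using S T by (intro compact_op_of_blocks_tendsto_zero bounded_op_commutator
        block_diagonal_commutator A0_bounded_op A0_block_diagonal)
  then show ?thesis unfolding commutator_def .
qed

end
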